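(* Let $X_1,\dots,X_n$ be independent Rademacher random variables, $d\le n$, and $f:\{-1,+1\}^n\to\mathbb{R}$ of the form $f(x)=\sum_{S\subseteq[n],|S|\le d}\hat f_Sx_S$. Then for every $t>0$, \[ \mathbb{P}\big(|f(X)-\mathbb{E}f(X)|\ge t\big)\le\exp\Big(1-\min_{j=1,\dots,d}\Big(\frac{t}{de\,\mathrm{W}_j(f)^{1/2}}\Big)^{2/j}\Big). \] Equivalently, with probability at least $1-\exp(1-t)$, $|f(X)-\mathbb{E}f(X)|\le de\max_{j=1,\dots,d}(\mathrm{W}_j(f)t^j)^{1/2}$.
   Context: $\mathbb{P}(X_i=1)=\mathbb{P}(X_i=-1)=1/2$. For $S\subseteq[n]$, $x_S=\prod_{i\in S}x_i$; $\hat f_S=\mathbb{E}[X_Sf(X)]$ are the Fourier–Walsh coefficients, and $\mathrm{W}_j(f)=\sum_{|S|=j}\hat f_S^2$ is the Fourier weight of order $j$ (terms with $\mathrm{W}_j(f)=0$ are interpreted as $+\infty$ in the minimum). *)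

theory Defs
  imports "HOL-Probability.Probability"
begin

definition cube :: "nat \<Rightarrow> (nat \<Rightarrow> real) set" where
  "cube n = ({..<n} \<rightarrow>\<^sub>E {-1, 1})"

text \<open>Uniform distribution on the cube = law of independent Rademacher variables X_1..X_n.\<close>
definition rad :: "nat \<Rightarrow> (nat \<Rightarrow> real) pmf" where
  "rad n = pmf_of_set (cube n)"

definition chi :: "nat set \<Rightarrow> (nat \<Rightarrow> real) \<Rightarrow> real" where
  "chi S x = (\<Prod>i\<in>S. x i)"

definition fourier :: "nat \<Rightarrow> ((nat \<Rightarrow> real) \<Rightarrow> real) \<Rightarrow> nat set \<Rightarrow> real" where
  "fourier n f S = measure_pmf.expectation (rad n) (\<lambda>x. chi S x * f x)"

definition weight :: "nat \<Rightarrow> ((nat \<Rightarrow> real) \<Rightarrow> real) \<Rightarrow> nat \<Rightarrow> real" where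
  "weight n f j = (\<Sum>S\<in>{S. S \<subseteq> {..<n} \<and> card S = j}. (fourier n f S)\<^sup>2)"

end

theory Submission
  imports Defs
begin

text \<open>
  Bonami's lemma: a function h of Walsh degree at most j on the cube satisfies
  E h^(2k) \<le> (2k - 1)^(jk) (E h^2)^k. It follows by induction on the dimension: write
  h = x_n D + E with deg D < j and deg E \<le> j, expand the 2k-th moment binomially (odd terms
  vanish), bound each mixed moment E[D^(2l) E^(2k-2l)] by Hoelder's inequality, and use
  C(2k, 2l) \<le> C(k, l) (2k - 1)^l to resum the result into a k-th power.

  The centred function f - E f is the sum of its homogeneous parts of degrees 1..d, whose second
  moments are the weights W_j. Convexity of s \<mapsto> s^(2k) and Bonami's lemma give
  E (f - E f)^(2k) \<le> (d^2 max_j (2k - 1)^j W_j)^k, and Markov's inequality, with 2k chosen within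
  distance one of the minimum in the statement, gives the bound exp (1 - min).
\<close>

section \<open>The discrete cube and Walsh characters\<close>

lemma finite_cube [simp]: "finite (cube n)"
  unfolding cube_def by (auto intro!: finite_PiE)

lemma card_cube: "card (cube n) = 2 ^ n"
  unfolding cube_def by (simp add: card_PiE numeral_2_eq_2)

lemma cube_nonempty [simp]: "cube n \<noteq> {}"
  using card_cube[of n] by (metis card.empty power_not_zero zero_neq_numeral)

lemma cube_Suc: "cube (Suc n) = (\<lambda>(v, x). x(n := v)) ` ({-1, 1} \<times> cube n)"
  unfolding cube_def lessThan_Suc by (simp add: PiE_insert_eq)

lemma sum_cube_Suc:
  "(\<Sum>x\<in>cube (Suc n). F x) = (\<Sum>x\<in>cube n. F (x(n := 1)) + F (x(n := -1)))"
proof -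
  have inj: "inj_on (\<lambda>(v, x). x(n := v)) ({-1::real, 1} \<times> cube n)"
    unfolding cube_def using inj_combinator[of n "{..<n}" "\<lambda>_. {-1::real, 1}"] by simp
  have "(\<Sum>x\<in>cube (Suc n). F x) = (\<Sum>(v, x)\<in>{-1::real, 1} \<times> cube n. F (x(n := v)))"
    unfolding cube_Suc sum.reindex[OF inj] by (simp add: case_prod_beta)
  also have "\<dots> = (\<Sum>v\<in>{-1::real, 1}. \<Sum>x\<in>cube n. F (x(n := v)))"
    by (rule sum.cartesian_product[symmetric])
  finally show ?thesis
    by (simp add: sum.distrib add.commute)
qed

lemma chi_fun_upd_notin: "i \<notin> S \<Longrightarrow> chi S (x(i := v)) = chi S x"
  unfolding chi_def by (intro prod.cong) auto

lemma chi_insert_fun_upd: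
  assumes "i \<notin> S" "finite S"
  shows "chi (insert i S) (x(i := v)) = v * chi S x"
  using assms chi_fun_upd_notin[OF assms(1)] unfolding chi_def by simp

lemma chi_eq_prod_lessThan:
  assumes "S \<subseteq> {..<n}"
  shows "chi S x = (\<Prod>i<n. if i \<in> S then x i else 1)"
proof -
  have "{i\<in>{..<n}. i \<in> S} = S" using assms by auto
  then show ?thesis
    unfolding chi_def by (simp add: prod.inter_filter[symmetric])
qed

lemma sum_cube_chi_mult:
  assumes "S \<subseteq> {..<n}" "T \<subseteq> {..<n}"
  shows "(\<Sum>x\<in>cube n. chi S x * chi T x) = (if S = T then 2 ^ n else 0)"
proof -
  have "(\<Sum>x\<in>cube n. chi S x * chi T x)
      = (\<Sum>x\<in>cube n. \<Prod>i<n. (if i \<in> S then x i else 1) * (if i \<in> T then x i else 1))"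
    using assms by (simp add: chi_eq_prod_lessThan prod.distrib)
  also have "\<dots> = (\<Prod>i<n. \<Sum>v\<in>{-1::real, 1}. (if i \<in> S then v else 1) * (if i \<in> T then v else 1))"
    unfolding cube_def by (subst prod_sum_PiE) auto
  also have "\<dots> = (\<Prod>i<n. if (i \<in> S) = (i \<in> T) then 2 else 0)"
    by (intro prod.cong) auto
  also have "\<dots> = (if S = T then 2 ^ n else 0)"
  proof (cases "S = T")
    case False
    then obtain i where "i < n" "(i \<in> S) \<noteq> (i \<in> T)" using assms by blast
    then show ?thesis using False by (subst prod_zero) auto
  qed simp
  finally show ?thesis .
qed

definition cube_mean :: "nat \<Rightarrow> ((nat \<Rightarrow> real) \<Rightarrow> real) \<Rightarrow> real" where
  "cube_mean n h = (\<Sum>x\<in>cube n. h x) / 2 ^ n"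

lemma expectation_rad: "measure_pmf.expectation (rad n) h = cube_mean n h"
  unfolding rad_def cube_mean_def by (simp add: integral_pmf_of_set card_cube)

lemma prob_rad: "measure_pmf.prob (rad n) A = real (card (cube n \<inter> A)) / 2 ^ n"
  unfolding rad_def by (simp add: measure_pmf_of_set card_cube)

lemma cube_mean_Suc:
  "cube_mean (Suc n) h = cube_mean n (\<lambda>x. (h (x(n := 1)) + h (x(n := -1))) / 2)"
  unfolding cube_mean_def sum_cube_Suc by (simp add: sum_divide_distrib[symmetric])

lemma cube_mean_cong: "(\<And>x. x \<in> cube n \<Longrightarrow> g x = h x) \<Longrightarrow> cube_mean n g = cube_mean n h"
  unfolding cube_mean_def by (simp cong: sum.cong)

lemma cube_mean_const: "(\<And>x. x \<in> cube n \<Longrightarrow> h x = a) \<Longrightarrow> cube_mean n h = a"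
  unfolding cube_mean_def by (simp add: card_cube cong: sum.cong)

lemma cube_mean_sum: "finite I \<Longrightarrow> cube_mean n (\<lambda>x. \<Sum>i\<in>I. h i x) = (\<Sum>i\<in>I. cube_mean n (h i))"
  unfolding cube_mean_def by (subst sum.swap) (simp add: sum_divide_distrib)

lemma cube_mean_cmult: "cube_mean n (\<lambda>x. a * h x) = a * cube_mean n h"
  unfolding cube_mean_def by (simp add: sum_distrib_left)

lemma cube_mean_divide: "cube_mean n (\<lambda>x. h x / a) = cube_mean n h / a"
  using cube_mean_cmult[of n "1 / a" h] by simp

lemma cube_mean_add: "cube_mean n (\<lambda>x. g x + h x) = cube_mean n g + cube_mean n h"
  unfolding cube_mean_def by (simp add: sum.distrib add_divide_distrib)

lemma cube_mean_mono: "(\<And>x. x \<in> cube n \<Longrightarrow> g x \<le> h x) \<Longrightarrow> cube_mean n g \<le> cube_mean n h"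
  unfolding cube_mean_def by (intro divide_right_mono sum_mono) auto

lemma cube_mean_nonneg: "(\<And>x. x \<in> cube n \<Longrightarrow> 0 \<le> h x) \<Longrightarrow> 0 \<le> cube_mean n h"
  unfolding cube_mean_def by (intro divide_nonneg_pos sum_nonneg) auto

lemma cube_mean_nonpos_imp_zero:
  assumes "\<And>x. x \<in> cube n \<Longrightarrow> 0 \<le> h x" "cube_mean n h \<le> 0" "x \<in> cube n"
  shows "h x = 0"
proof -
  have "(\<Sum>x\<in>cube n. h x) = 0"
  proof -
    have "(\<Sum>x\<in>cube n. h x) = cube_mean n h * 2 ^ n"
      unfolding cube_mean_def by simp
    then have "(\<Sum>x\<in>cube n. h x) \<le> 0"
      using assms(2) by (simp add: mult_nonpos_nonneg)
    then show ?thesis using assms(1) sum_nonneg[of "cube n" h] by force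
  qed
  then show ?thesis using assms(1,3) sum_nonneg_eq_0_iff[of "cube n" h] by auto
qed

lemma cube_mean_chi_mult:
  "S \<subseteq> {..<n} \<Longrightarrow> T \<subseteq> {..<n} \<Longrightarrow> cube_mean n (\<lambda>x. chi S x * chi T x) = (if S = T then 1 else 0)"
  unfolding cube_mean_def by (simp add: sum_cube_chi_mult)

lemma cube_mean_chi_mult_sum:
  assumes "finite I" "I \<subseteq> Pow {..<n}" "S \<subseteq> {..<n}"
  shows "cube_mean n (\<lambda>x. chi S x * (\<Sum>T\<in>I. a T * chi T x)) = (if S \<in> I then a S else 0)"
proof -
  have "cube_mean n (\<lambda>x. chi S x * (\<Sum>T\<in>I. a T * chi T x))
      = (\<Sum>T\<in>I. a T * cube_mean n (\<lambda>x. chi S x * chi T x))"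
    using assms(1) by (simp add: sum_distrib_left mult.left_commute cube_mean_sum cube_mean_cmult)
  also have "\<dots> = (\<Sum>T\<in>I. if T = S then a T else 0)"
  proof (intro sum.cong refl)
    fix T assume "T \<in> I"
    then show "a T * cube_mean n (\<lambda>x. chi S x * chi T x) = (if T = S then a T else 0)"
    proof -
      have "T \<subseteq> {..<n}" using \<open>T \<in> I\<close> assms(2) by auto
      then show ?thesis using assms(3) cube_mean_chi_mult[of S n T] by auto
    qed
  qed
  finally show ?thesis
    using assms(1) by (simp add: sum.delta')
qed

lemma cube_mean_square_sum:
  assumes "finite I" "I \<subseteq> Pow {..<n}"
  shows "cube_mean n (\<lambda>x. (\<Sum>T\<in>I. a T * chi T x)\<^sup>2) = (\<Sum>T\<in>I. (a T)\<^sup>2)"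
proof -
  have "cube_mean n (\<lambda>x. (\<Sum>T\<in>I. a T * chi T x)\<^sup>2)
      = (\<Sum>S\<in>I. a S * cube_mean n (\<lambda>x. chi S x * (\<Sum>T\<in>I. a T * chi T x)))"
    using assms(1)
    by (simp add: power2_eq_square sum_distrib_right mult.assoc cube_mean_sum cube_mean_cmult)
  also have "\<dots> = (\<Sum>S\<in>I. (a S)\<^sup>2)"
    using assms cube_mean_chi_mult_sum[OF assms]
    by (intro sum.cong) (auto simp: power2_eq_square)
  finally show ?thesis .
qed

section \<open>Bonami's lemma\<close>

definition walsh_deg_le :: "nat \<Rightarrow> nat \<Rightarrow> ((nat \<Rightarrow> real) \<Rightarrow> real) \<Rightarrow> bool" where
  "walsh_deg_le n j h \<longleftrightarrow> (\<exists>a. (\<forall>S. S \<subseteq> {..<n} \<longrightarrow> j < card S \<longrightarrow> a S = 0) \<and>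
                               (\<forall>x\<in>cube n. h x = (\<Sum>S\<in>Pow {..<n}. a S * chi S x)))"

lemma walsh_deg_le_const:
  assumes "walsh_deg_le n j h" "j = 0 \<or> n = 0"
  obtains a where "\<And>x. x \<in> cube n \<Longrightarrow> h x = a"
proof -
  obtain a where a: "\<forall>S. S \<subseteq> {..<n} \<longrightarrow> j < card S \<longrightarrow> a S = 0"
      "\<forall>x\<in>cube n. h x = (\<Sum>S\<in>Pow {..<n}. a S * chi S x)"
    using assms(1) unfolding walsh_deg_le_def by blast
  have "a S = 0" if "S \<in> Pow {..<n} - {{}}" for S
    using that a(1) assms(2) finite_subset[of S "{..<n}"] by (auto simp: card_gt_0_iff)
  then have "h x = a {}" if "x \<in> cube n" for x
    using a(2) that by (simp add: sum.remove[of _ "{}"] chi_def)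
  then show ?thesis using that by blast
qed

lemma walsh_deg_le_Suc_split:
  assumes "walsh_deg_le (Suc n) j h" "j \<ge> 1"
  obtains D E where "walsh_deg_le n (j - 1) D" "walsh_deg_le n j E"
    "\<And>x v. x \<in> cube n \<Longrightarrow> v \<in> {-1, 1} \<Longrightarrow> h (x(n := v)) = v * D x + E x"
proof -
  obtain a where a: "\<forall>S. S \<subseteq> {..<Suc n} \<longrightarrow> j < card S \<longrightarrow> a S = 0"
      "\<forall>x\<in>cube (Suc n). h x = (\<Sum>S\<in>Pow {..<Suc n}. a S * chi S x)"
    using assms(1) unfolding walsh_deg_le_def by blast
  have inj: "inj_on (insert n) (Pow {..<n})"
    by (rule inj_onI) (metis PowD insert_ident lessThan_iff less_irrefl subsetD)
  define D where "D x = (\<Sum>T\<in>Pow {..<n}. a (insert n T) * chi T x)" for x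
  define E where "E x = (\<Sum>T\<in>Pow {..<n}. a T * chi T x)" for x
  have "walsh_deg_le n (j - 1) D"
    unfolding walsh_deg_le_def
  proof (intro exI[of _ "\<lambda>T. a (insert n T)"] conjI allI impI ballI)
    fix S assume S: "S \<subseteq> {..<n}" "j - 1 < card S"
    have "n \<notin> S" using S(1) by auto
    then have "card (insert n S) = Suc (card S)"
      using finite_subset[OF S(1)] by simp
    moreover have "insert n S \<subseteq> {..<Suc n}" using S(1) by auto
    ultimately show "a (insert n S) = 0"
      using a(1) S(2) assms(2) by simp
  qed (simp add: D_def)
  moreover have "walsh_deg_le n j E"
    unfolding walsh_deg_le_def
  proof (intro exI[of _ a] conjI allI impI ballI)
    fix S assume "S \<subseteq> {..<n}" "j < card S"
    then show "a S = 0" using a(1) by (meson lessThan_subset_iff le_SucI order_refl subset_trans)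
  qed (simp add: E_def)
  moreover have "h (x(n := v)) = v * D x + E x" if x: "x \<in> cube n" and v: "v \<in> {-1, 1}" for x v
  proof -
    have "x(n := v) \<in> cube (Suc n)" unfolding cube_Suc using x v by force
    then have "h (x(n := v)) = (\<Sum>S\<in>Pow {..<n} \<union> insert n ` Pow {..<n}. a S * chi S (x(n := v)))"
      using a(2) by (simp add: lessThan_Suc Pow_insert)
    also have "\<dots> = (\<Sum>S\<in>Pow {..<n}. a S * chi S (x(n := v)))
                   + (\<Sum>T\<in>Pow {..<n}. a (insert n T) * chi (insert n T) (x(n := v)))"
      by (subst sum.union_disjoint) (auto simp: sum.reindex[OF inj])
    also have "\<dots> = E x + v * D x"
    proof -
      have "n \<notin> T" "finite T" if "T \<in> Pow {..<n}" for T
        using that finite_subset by auto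
      then show ?thesis
        unfolding D_def E_def sum_distrib_left
        by (intro arg_cong2[where f = "(+)"] sum.cong refl)
          (simp_all add: chi_fun_upd_notin chi_insert_fun_upd)
    qed
    finally show ?thesis by simp
  qed
  ultimately show ?thesis using that by blast
qed

lemma even_binomial_le:
  assumes "l \<le> k"
  shows "real (2 * k choose (2 * l)) \<le> real (k choose l) * (2 * real k - 1) ^ l"
  using assms
proof (induction l)
  case 0
  then show ?case by simp
next
  case (Suc l)
  define c where "c = 2 * real k - 1"
  have lk: "l < k" using Suc.prems by simp
  have step: "real (Suc i) * real (m choose Suc i) = (real m - real i) * real (m choose i)"
    if "i < m" for i m :: nat
  proof -
    have "Suc i * (m choose Suc i) = (m - i) * (m choose i)"
      using binomial_absorption[of i m] binomial_absorb_comp[of m i] by simp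
    then show ?thesis using that by (metis of_nat_diff less_imp_le of_nat_mult)
  qed
  define B0 B1 B2 where "B0 = real (2 * k choose (2 * l))"
    and "B1 = real (2 * k choose Suc (2 * l))" and "B2 = real (2 * k choose (2 * Suc l))"
  define C0 C1 where "C0 = real (k choose l)" and "C1 = real (k choose Suc l)"
  have r1: "(2 * real l + 1) * B1 = (2 * real k - 2 * real l) * B0"
    using step[of "2 * l" "2 * k"] lk unfolding B0_def B1_def by (simp add: add.commute)
  have r2: "(2 * real l + 2) * B2 = (2 * real k - 2 * real l - 1) * B1"
    using step[of "Suc (2 * l)" "2 * k"] lk unfolding B1_def B2_def by (simp add: algebra_simps)
  have r3: "(real l + 1) * C1 = (real k - real l) * C0"
    using step[of l k] lk unfolding C0_def C1_def by (simp add: algebra_simps)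
  have IH: "B0 \<le> C0 * c ^ l" using Suc.IH lk unfolding B0_def C0_def c_def by simp
  have "(2 * real l + 1) * (2 * real l + 2) * B2
      = (2 * real k - 2 * real l - 1) * (2 * real k - 2 * real l) * B0"
    using r1 r2 by (metis mult.assoc mult.commute)
  also have "\<dots> \<le> (2 * real k - 2 * real l - 1) * (2 * real k - 2 * real l) * (C0 * c ^ l)"
    using IH lk by (intro mult_left_mono) auto
  also have "\<dots> = (2 * real k - 2 * real l - 1) * 2 * ((real k - real l) * C0) * c ^ l"
    by (simp add: algebra_simps)
  also have "\<dots> = (2 * real k - 2 * real l - 1) * 2 * ((real l + 1) * C1) * c ^ l"
    by (simp only: r3)
  also have "\<dots> \<le> (c * (2 * real l + 1)) * 2 * ((real l + 1) * C1) * c ^ l"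
    using lk unfolding c_def C1_def by (intro mult_right_mono) (auto simp: algebra_simps)
  also have "\<dots> = (2 * real l + 1) * (2 * real l + 2) * (C1 * c ^ Suc l)"
    by (simp add: algebra_simps)
  finally have "B2 \<le> C1 * c ^ Suc l"
    by (rule mult_left_le_imp_le) simp
  then show ?case unfolding B2_def C1_def c_def .
qed

lemma even_part_binomial:
  fixes a b :: real
  shows "((b + a) ^ (2 * k) + (b - a) ^ (2 * k)) / 2
       = (\<Sum>l\<le>k. real (2 * k choose (2 * l)) * (a\<^sup>2) ^ l * (b\<^sup>2) ^ (k - l))"
proof -
  define F where "F i = real (2 * k choose i) * (a ^ i + (- a) ^ i) * b ^ (2 * k - i)" for i
  have "(b + a) ^ (2 * k) + (b - a) ^ (2 * k) = (\<Sum>i\<le>2 * k. F i)"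
    using binomial_ring[of a b "2 * k"] binomial_ring[of "- a" b "2 * k"]
    by (simp add: F_def sum.distrib[symmetric] algebra_simps)
  also have "\<dots> = (\<Sum>i<2 * Suc k. if even i then F i else F i)"
    by (simp add: F_def lessThan_Suc_atMost[symmetric])
  also have "\<dots> = (\<Sum>l<Suc k. F (2 * l)) + (\<Sum>l<Suc k. F (2 * l + 1))"
    by (rule sum_split_even_odd)
  also have "\<dots> = (\<Sum>l\<le>k. 2 * (real (2 * k choose (2 * l)) * (a\<^sup>2) ^ l * (b\<^sup>2) ^ (k - l)))"
    by (auto simp: F_def lessThan_Suc_atMost power_mult diff_mult_distrib2[symmetric]
        intro!: sum.cong)
  finally show ?thesis by (simp add: sum_distrib_left[symmetric])
qed

lemma weighted_am_gm_nat:
  fixes x y :: real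
  assumes "0 \<le> x" "0 \<le> y" "l \<le> k"
  shows "real k * (x ^ l * y ^ (k - l)) \<le> real l * x ^ k + real (k - l) * y ^ k"
proof (cases "x = 0 \<or> y = 0 \<or> l = 0 \<or> l = k")
  case True
  then show ?thesis using assms by (auto simp: power_0_left of_nat_diff)
next
  case False
  then have xy: "0 < x" "0 < y" and l: "0 < l" "l < k" using assms by auto
  have "(x ^ k) powr (real l / real k) * (y ^ k) powr (real (k - l) / real k)
        \<le> (real l / real k) * x ^ k + (real (k - l) / real k) * y ^ k"
    using xy l by (intro Youngs_inequality_0) (auto simp: of_nat_diff field_simps)
  moreover have "(x ^ k) powr (real l / real k) = x ^ l" "(y ^ k) powr (real (k - l) / real k) = y ^ (k - l)"
    using xy l by (simp_all add: powr_realpow[symmetric] powr_powr)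
  ultimately show ?thesis using l by (simp add: field_simps)
qed

lemma cube_mean_holder_normalized:
  assumes "\<And>x. x \<in> cube n \<Longrightarrow> 0 \<le> u x" "\<And>x. x \<in> cube n \<Longrightarrow> 0 \<le> w x"
    and "cube_mean n (\<lambda>x. u x ^ k) \<le> 1" "cube_mean n (\<lambda>x. w x ^ k) \<le> 1"
    and "l \<le> k" "0 < k"
  shows "cube_mean n (\<lambda>x. u x ^ l * w x ^ (k - l)) \<le> 1"
proof -
  have "real k * cube_mean n (\<lambda>x. u x ^ l * w x ^ (k - l))
      \<le> cube_mean n (\<lambda>x. real l * u x ^ k + real (k - l) * w x ^ k)"
    unfolding cube_mean_cmult[symmetric] using assms(1,2,5)
    by (intro cube_mean_mono weighted_am_gm_nat) auto
  also have "\<dots> \<le> real l + real (k - l)"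
    using assms(3,4) unfolding cube_mean_add cube_mean_cmult
    by (intro add_mono mult_left_le) auto
  finally show ?thesis using assms(5,6) by (simp add: of_nat_diff)
qed

lemma cube_mean_holder:
  assumes u: "\<And>x. x \<in> cube n \<Longrightarrow> 0 \<le> u x" and w: "\<And>x. x \<in> cube n \<Longrightarrow> 0 \<le> w x"
    and U: "cube_mean n (\<lambda>x. u x ^ k) \<le> p ^ k" and W: "cube_mean n (\<lambda>x. w x ^ k) \<le> r ^ k"
    and "0 \<le> p" "0 \<le> r" "l \<le> k"
  shows "cube_mean n (\<lambda>x. u x ^ l * w x ^ (k - l)) \<le> p ^ l * r ^ (k - l)"
proof -
  consider "l = 0" | "l = k" | "0 < l" "l < k" "p = 0 \<or> r = 0" | "0 < l" "l < k" "0 < p" "0 < r"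
    using assms(5-7) by linarith
  then show ?thesis
  proof cases
    case 3
    then have "(u x = 0 \<or> w x = 0)" if "x \<in> cube n" for x
      using cube_mean_nonpos_imp_zero[of n "\<lambda>x. u x ^ k" x] cube_mean_nonpos_imp_zero[of n "\<lambda>x. w x ^ k" x]
        U W u w that by (auto simp: power_0_left)
    then have "cube_mean n (\<lambda>x. u x ^ l * w x ^ (k - l)) = 0"
      using 3 by (intro cube_mean_const) auto
    then show ?thesis using assms(5,6) by simp
  next
    case 4
    have "cube_mean n (\<lambda>x. (u x / p) ^ l * (w x / r) ^ (k - l)) \<le> 1"
      using 4 u w U W
      by (intro cube_mean_holder_normalized) (auto simp: power_divide cube_mean_divide)
    then show ?thesis
      using 4 by (simp add: power_divide cube_mean_divide)
  qed (use U W in simp_all)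
qed

lemma bonami_const:
  assumes "\<And>x. x \<in> cube n \<Longrightarrow> h x = a" "1 \<le> k"
  shows "cube_mean n (\<lambda>x. h x ^ (2 * k)) \<le> (2 * real k - 1) ^ (j * k) * cube_mean n (\<lambda>x. (h x)\<^sup>2) ^ k"
proof -
  have "cube_mean n (\<lambda>x. h x ^ (2 * k)) = (a\<^sup>2) ^ k" "cube_mean n (\<lambda>x. (h x)\<^sup>2) = a\<^sup>2"
    using assms(1) by (simp_all add: cube_mean_const power_mult)
  moreover have "1 \<le> (2 * real k - 1) ^ (j * k)"
    using assms(2) by (intro one_le_power) simp
  ultimately show ?thesis
    using mult_right_mono[of 1 "(2 * real k - 1) ^ (j * k)" "(a\<^sup>2) ^ k"] by simp
qed

lemma bonami_step:
  fixes k j :: nat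
  defines "c \<equiv> 2 * real k - 1"
  assumes "1 \<le> k" "1 \<le> j"
    and h: "\<And>x v. x \<in> cube n \<Longrightarrow> v \<in> {-1, 1} \<Longrightarrow> h (x(n := v)) = v * D x + E x"
    and D: "cube_mean n (\<lambda>x. D x ^ (2 * k)) \<le> c ^ ((j - 1) * k) * cube_mean n (\<lambda>x. (D x)\<^sup>2) ^ k"
    and E: "cube_mean n (\<lambda>x. E x ^ (2 * k)) \<le> c ^ (j * k) * cube_mean n (\<lambda>x. (E x)\<^sup>2) ^ k"
  shows "cube_mean (Suc n) (\<lambda>x. h x ^ (2 * k)) \<le> c ^ (j * k) * cube_mean (Suc n) (\<lambda>x. (h x)\<^sup>2) ^ k"
proof -
  define a b where "a = cube_mean n (\<lambda>x. (D x)\<^sup>2)" and "b = cube_mean n (\<lambda>x. (E x)\<^sup>2)"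
  define p r where "p = c ^ (j - 1) * a" and "r = c ^ j * b"
  have c: "1 \<le> c" using assms(2) unfolding c_def by simp
  have "0 \<le> a" "0 \<le> b" unfolding a_def b_def by (simp_all add: cube_mean_nonneg)
  then have pr: "0 \<le> p" "0 \<le> r" using c unfolding p_def r_def by simp_all
  have h_pm: "h (x(n := 1)) = E x + D x" "h (x(n := -1)) = E x - D x" if "x \<in> cube n" for x
    using h[OF that] by auto
  have second: "cube_mean (Suc n) (\<lambda>x. (h x)\<^sup>2) = a + b"
    unfolding cube_mean_Suc a_def b_def cube_mean_add[symmetric]
    by (intro cube_mean_cong) (simp add: h_pm power2_eq_square field_simps)
  have moment: "cube_mean (Suc n) (\<lambda>x. h x ^ (2 * k))
      = (\<Sum>l\<le>k. real (2 * k choose (2 * l)) * cube_mean n (\<lambda>x. ((D x)\<^sup>2) ^ l * ((E x)\<^sup>2) ^ (k - l)))"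
  proof -
    have "cube_mean (Suc n) (\<lambda>x. h x ^ (2 * k))
        = cube_mean n (\<lambda>x. \<Sum>l\<le>k. real (2 * k choose (2 * l)) * (((D x)\<^sup>2) ^ l * ((E x)\<^sup>2) ^ (k - l)))"
      unfolding cube_mean_Suc by (intro cube_mean_cong) (simp add: h_pm even_part_binomial mult.assoc)
    then show ?thesis by (simp add: cube_mean_sum cube_mean_cmult)
  qed
  have summand_le: "real (2 * k choose (2 * l)) * cube_mean n (\<lambda>x. ((D x)\<^sup>2) ^ l * ((E x)\<^sup>2) ^ (k - l))
      \<le> real (k choose l) * (c * p) ^ l * r ^ (k - l)" if "l \<le> k" for l
  proof -
    have "cube_mean n (\<lambda>x. ((D x)\<^sup>2) ^ l * ((E x)\<^sup>2) ^ (k - l)) \<le> p ^ l * r ^ (k - l)"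
      using D E pr that unfolding p_def r_def a_def b_def
      by (intro cube_mean_holder) (simp_all add: power_mult power_mult_distrib)
    moreover have "0 \<le> cube_mean n (\<lambda>x. ((D x)\<^sup>2) ^ l * ((E x)\<^sup>2) ^ (k - l))"
      by (simp add: cube_mean_nonneg)
    ultimately have "real (2 * k choose (2 * l)) * cube_mean n (\<lambda>x. ((D x)\<^sup>2) ^ l * ((E x)\<^sup>2) ^ (k - l))
        \<le> (real (k choose l) * c ^ l) * (p ^ l * r ^ (k - l))"
      using even_binomial_le[OF that] pr unfolding c_def[symmetric] by (intro mult_mono) auto
    then show ?thesis by (simp add: power_mult_distrib mult_ac)
  qed
  txt \<open>Since c p = c^j a, the right-hand side resums to (c^j (a + b))^k.\<close>
  have "cube_mean (Suc n) (\<lambda>x. h x ^ (2 * k)) \<le> (\<Sum>l\<le>k. real (k choose l) * (c * p) ^ l * r ^ (k - l))"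
    unfolding moment by (intro sum_mono summand_le) simp
  also have "\<dots> = (c * p + r) ^ k"
    by (simp add: binomial_ring mult_ac)
  also have "c * p + r = c ^ j * (a + b)"
    using assms(3) unfolding p_def r_def by (simp add: power_Suc[symmetric] distrib_left mult.assoc)
  finally show ?thesis
    unfolding second by (simp add: power_mult power_mult_distrib)
qed

lemma bonami:
  assumes "1 \<le> k" "walsh_deg_le n j h"
  shows "cube_mean n (\<lambda>x. h x ^ (2 * k)) \<le> (2 * real k - 1) ^ (j * k) * cube_mean n (\<lambda>x. (h x)\<^sup>2) ^ k"
  using assms(2)
proof (induction n arbitrary: j h)
  case 0
  then show ?case by (metis walsh_deg_le_const bonami_const assms(1))
next
  case (Suc n)
  show ?case
  proof (cases "j = 0")
    case True
    then show ?thesis by (metis walsh_deg_le_const bonami_const assms(1) Suc.prems)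
  next
    case False
    then have j: "1 \<le> j" by simp
    obtain D E where DE: "walsh_deg_le n (j - 1) D" "walsh_deg_le n j E"
        "\<And>x v. x \<in> cube n \<Longrightarrow> v \<in> {-1, 1} \<Longrightarrow> h (x(n := v)) = v * D x + E x"
      using walsh_deg_le_Suc_split[OF Suc.prems j] by blast
    show ?thesis
      using bonami_step[OF assms(1) j DE(3) Suc.IH[OF DE(1)] Suc.IH[OF DE(2)]] .
  qed
qed

section \<open>Tail bound for low-degree functions\<close>

lemma power_sum_le:
  fixes y :: "'a \<Rightarrow> real"
  assumes "finite A" "1 \<le> k"
  shows "(\<Sum>i\<in>A. y i) ^ (2 * k) \<le> real (card A) ^ (2 * k - 1) * (\<Sum>i\<in>A. y i ^ (2 * k))"
proof (cases "A = {}")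
  case False
  define N where "N = real (card A)"
  have N: "0 < N" using assms False unfolding N_def by (simp add: card_gt_0_iff)
  have "(\<Sum>i\<in>A. (1 / N) *\<^sub>R y i) ^ (2 * k) \<le> (\<Sum>i\<in>A. (1 / N) * y i ^ (2 * k))"
    using convex_on_sum[OF assms(1) False convex_power_even[of "2 * k"], of "\<lambda>_. 1 / N" y] N
    by (simp add: N_def)
  then have "(\<Sum>i\<in>A. y i) ^ (2 * k) \<le> (\<Sum>i\<in>A. y i ^ (2 * k)) / N * N ^ (2 * k)"
    using N by (simp add: sum_divide_distrib[symmetric] power_divide divide_le_eq)
  also have "N ^ (2 * k) = N * N ^ (2 * k - 1)"
    using assms(2) by (metis Suc_diff_1 mult_pos_pos pos2 less_le_trans zero_less_one power_Suc)
  finally show ?thesis using N unfolding N_def by (simp add: mult_ac)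
qed (use assms in \<open>simp add: power_0_left\<close>)

lemma prob_rad_abs_ge_le:
  assumes "0 < t"
  shows "measure_pmf.prob (rad n) {x. t \<le> \<bar>g x\<bar>} \<le> cube_mean n (\<lambda>x. g x ^ (2 * k)) / t ^ (2 * k)"
proof -
  define A where "A = cube n \<inter> {x. t \<le> \<bar>g x\<bar>}"
  have "real (card A) * t ^ (2 * k) = (\<Sum>x\<in>A. t ^ (2 * k))" by simp
  also have "\<dots> \<le> (\<Sum>x\<in>A. g x ^ (2 * k))"
  proof (intro sum_mono)
    fix x assume "x \<in> A"
    then have "t ^ (2 * k) \<le> \<bar>g x\<bar> ^ (2 * k)"
      using assms unfolding A_def by (intro power_mono) auto
    then show "t ^ (2 * k) \<le> g x ^ (2 * k)" by (simp add: power_even_abs)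
  qed
  also have "\<dots> \<le> (\<Sum>x\<in>cube n. g x ^ (2 * k))"
    unfolding A_def by (intro sum_mono2) (auto simp: zero_le_even_power)
  finally show ?thesis
    using assms unfolding prob_rad A_def[symmetric] cube_mean_def by (simp add: field_simps)
qed

definition walsh_level :: "nat \<Rightarrow> (nat set \<Rightarrow> real) \<Rightarrow> nat \<Rightarrow> (nat \<Rightarrow> real) \<Rightarrow> real" where
  "walsh_level n c j x = (\<Sum>S\<in>{S. S \<subseteq> {..<n} \<and> card S = j}. c S * chi S x)"

lemma walsh_deg_le_level: "walsh_deg_le n j (walsh_level n c j)"
  unfolding walsh_deg_le_def
proof (intro exI[of _ "\<lambda>S. if card S = j then c S else 0"] conjI allI impI ballI)
  fix x
  have "(\<Sum>S\<in>Pow {..<n}. (if card S = j then c S else 0) * chi S x)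
      = (\<Sum>S\<in>Pow {..<n}. if card S = j then c S * chi S x else 0)"
    by (intro sum.cong) auto
  also have "\<dots> = (\<Sum>S\<in>{S \<in> Pow {..<n}. card S = j}. c S * chi S x)"
    by (rule sum.inter_filter[symmetric]) simp
  also have "{S \<in> Pow {..<n}. card S = j} = {S. S \<subseteq> {..<n} \<and> card S = j}" by auto
  finally show "walsh_level n c j x = (\<Sum>S\<in>Pow {..<n}. (if card S = j then c S else 0) * chi S x)"
    unfolding walsh_level_def by simp
qed auto

lemma cube_mean_walsh_level_square:
  "cube_mean n (\<lambda>x. (walsh_level n c j x)\<^sup>2) = (\<Sum>S\<in>{S. S \<subseteq> {..<n} \<and> card S = j}. (c S)\<^sup>2)"
  unfolding walsh_level_def by (rule cube_mean_square_sum) (auto intro: finite_subset)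

lemma fourier_walsh_expansion:
  assumes "finite I" "I \<subseteq> Pow {..<n}" "\<forall>x\<in>cube n. f x = (\<Sum>T\<in>I. c T * chi T x)" "S \<in> I"
  shows "fourier n f S = c S"
proof -
  have "fourier n f S = cube_mean n (\<lambda>x. chi S x * (\<Sum>T\<in>I. c T * chi T x))"
    unfolding fourier_def expectation_rad using assms(3) by (intro cube_mean_cong) simp
  also have "\<dots> = c S" using cube_mean_chi_mult_sum[OF assms(1,2)] assms(2,4) by auto
  finally show ?thesis .
qed

lemma
  assumes f: "\<forall>x\<in>cube n. f x = (\<Sum>S\<in>{S. S \<subseteq> {..<n} \<and> card S \<le> d}. c S * chi S x)"
  shows weight_eq_cube_mean_walsh_level:
      "j \<le> d \<Longrightarrow> weight n f j = cube_mean n (\<lambda>x. (walsh_level n c j x)\<^sup>2)"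
    and centered_eq_sum_walsh_level:
      "x \<in> cube n \<Longrightarrow> f x - measure_pmf.expectation (rad n) f = (\<Sum>j\<in>{1..d}. walsh_level n c j x)"
proof -
  define I where "I = {S. S \<subseteq> {..<n} \<and> card S \<le> d}"
  have I: "finite I" "I \<subseteq> Pow {..<n}" unfolding I_def by (auto intro: finite_subset)
  have coeff: "fourier n f S = c S" if "S \<subseteq> {..<n}" "card S \<le> d" for S
    using fourier_walsh_expansion[OF I] f that unfolding I_def by blast
  show "weight n f j = cube_mean n (\<lambda>x. (walsh_level n c j x)\<^sup>2)" if "j \<le> d"
    unfolding weight_def cube_mean_walsh_level_square using that by (intro sum.cong) (auto simp: coeff)
  have "measure_pmf.expectation (rad n) f = fourier n f {}"
    unfolding fourier_def by (simp add: chi_def)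
  then have mean: "measure_pmf.expectation (rad n) f = c {}"
    by (simp add: coeff)
  show "f x - measure_pmf.expectation (rad n) f = (\<Sum>j\<in>{1..d}. walsh_level n c j x)" if x: "x \<in> cube n"
  proof -
    have "f x = (\<Sum>j\<le>d. \<Sum>S\<in>{S \<in> I. card S = j}. c S * chi S x)"
      unfolding f[rule_format, OF x] I_def[symmetric]
      by (rule sum.group[symmetric, OF I(1) finite_atMost]) (auto simp: I_def)
    also have "\<dots> = (\<Sum>j\<le>d. walsh_level n c j x)"
      unfolding walsh_level_def I_def by (intro sum.cong refl) auto
    also have "\<dots> = walsh_level n c 0 x + (\<Sum>j\<in>{1..d}. walsh_level n c j x)"
      by (simp add: atMost_atLeast0 sum.atLeast_Suc_atMost)
    also have "walsh_level n c 0 x = c {}"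
      unfolding walsh_level_def by (simp add: card_eq_0_iff finite_subset chi_def cong: conj_cong)
    finally show ?thesis unfolding mean by simp
  qed
qed

lemma centered_moment_le:
  assumes f: "\<forall>x\<in>cube n. f x = (\<Sum>S\<in>{S. S \<subseteq> {..<n} \<and> card S \<le> d}. c S * chi S x)"
    and k: "1 \<le> k"
    and B: "\<forall>j\<in>{1..d}. (2 * real k - 1) ^ j * weight n f j \<le> B"
  shows "cube_mean n (\<lambda>x. (f x - measure_pmf.expectation (rad n) f) ^ (2 * k)) \<le> (real d ^ 2 * B) ^ k"
proof -
  let ?g = "walsh_level n c"
  have "cube_mean n (\<lambda>x. (f x - measure_pmf.expectation (rad n) f) ^ (2 * k))
      \<le> cube_mean n (\<lambda>x. real d ^ (2 * k - 1) * (\<Sum>j\<in>{1..d}. ?g j x ^ (2 * k)))"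
    using power_sum_le[OF _ k, of "{1..d}"]
    by (intro cube_mean_mono) (simp add: centered_eq_sum_walsh_level[OF f])
  also have "\<dots> = real d ^ (2 * k - 1) * (\<Sum>j\<in>{1..d}. cube_mean n (\<lambda>x. ?g j x ^ (2 * k)))"
    by (simp add: cube_mean_cmult cube_mean_sum)
  also have "\<dots> \<le> real d ^ (2 * k - 1) * (\<Sum>j\<in>{1..d}. B ^ k)"
  proof (intro mult_left_mono sum_mono)
    fix j assume j: "j \<in> {1..d}"
    have W: "weight n f j = cube_mean n (\<lambda>x. (?g j x)\<^sup>2)"
      using j by (simp add: weight_eq_cube_mean_walsh_level[OF f])
    have "cube_mean n (\<lambda>x. ?g j x ^ (2 * k)) \<le> ((2 * real k - 1) ^ j * weight n f j) ^ k"
      using bonami[OF k walsh_deg_le_level] by (simp add: W power_mult power_mult_distrib)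
    also have "\<dots> \<le> B ^ k"
    proof (intro power_mono)
      show "0 \<le> (2 * real k - 1) ^ j * weight n f j"
        using k by (simp add: W cube_mean_nonneg)
    qed (use B j in simp)
    finally show "cube_mean n (\<lambda>x. ?g j x ^ (2 * k)) \<le> B ^ k" .
  qed simp
  also have "\<dots> = real d ^ Suc (2 * k - 1) * B ^ k"
    by (simp add: power_Suc2)
  also have "\<dots> = (real d ^ 2 * B) ^ k"
    using k by (simp add: power_mult power_mult_distrib)
  finally show ?thesis .
qed

lemma obtain_odd_bracket:
  fixes P :: real
  assumes "1 \<le> P"
  obtains k :: nat where "1 \<le> k" "2 * real k - 1 \<le> P" "P < 2 * real k + 1"
proof
  define m where "m = \<lfloor>(P + 1) / 2\<rfloor>"
  have "1 \<le> m" using assms unfolding m_def by (simp add: le_floor_iff)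
  moreover have "real_of_int m \<le> (P + 1) / 2" "(P + 1) / 2 < real_of_int m + 1"
    unfolding m_def by linarith+
  ultimately show "1 \<le> nat m" "2 * real (nat m) - 1 \<le> P" "P < 2 * real (nat m) + 1"
    by simp_all
qed

lemma power_mult_le_of_le_powr:
  fixes a b w :: real
  assumes "0 \<le> b" "b \<le> (a / sqrt w) powr (2 / real j)" "0 < a" "0 < w" "0 < j"
  shows "b ^ j * w \<le> a\<^sup>2"
proof -
  have "b ^ j \<le> ((a / sqrt w) powr (2 / real j)) ^ j"
    by (rule power_mono[OF assms(2,1)])
  also have "\<dots> = ((a / sqrt w) powr (2 / real j)) powr real j"
    using assms(3,4) by (simp add: powr_realpow)
  also have "\<dots> = (a / sqrt w)\<^sup>2"
    using assms(3-5) by (simp add: powr_powr)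
  also have "\<dots> = a\<^sup>2 / w"
    using assms(4) by (simp add: power_divide)
  finally show ?thesis
    using assms(4) by (simp add: le_divide_eq)
qed

lemma weights_le_of_le_Min:
  fixes W :: "nat \<Rightarrow> real"
  assumes "2 * real k - 1 \<le> Min ((\<lambda>j. (t / (real d * exp 1 * sqrt (W j))) powr (2 / real j)) `
                                  {j\<in>{1..d}. W j \<noteq> 0})"
    and "\<And>j. 0 \<le> W j" "1 \<le> k" "0 < t"
  shows "\<forall>j\<in>{1..d}. (2 * real k - 1) ^ j * W j \<le> (t / (real d * exp 1))\<^sup>2"
proof
  fix j assume j: "j \<in> {1..d}"
  show "(2 * real k - 1) ^ j * W j \<le> (t / (real d * exp 1))\<^sup>2"
  proof (cases "W j = 0")
    case False
    with assms(2) have "0 < W j" by (simp add: less_le)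
    moreover have "2 * real k - 1 \<le> (t / (real d * exp 1 * sqrt (W j))) powr (2 / real j)"
      using assms(1) j False by (auto intro: order_trans Min_le)
    ultimately show ?thesis
      using assms(3,4) j by (intro power_mult_le_of_le_powr) (simp_all add: divide_divide_eq_left)
  qed simp
qed

lemma
  assumes f: "\<forall>x\<in>cube n. f x = (\<Sum>S\<in>{S. S \<subseteq> {..<n} \<and> card S \<le> d}. c S * chi S x)"
    and "0 < t" "1 \<le> k"
  shows prob_centered_ge_le_moment:
      "\<forall>j\<in>{1..d}. (2 * real k - 1) ^ j * weight n f j \<le> B \<Longrightarrow>
       measure_pmf.prob (rad n) {x. t \<le> \<bar>f x - measure_pmf.expectation (rad n) f\<bar>}
         \<le> (real d ^ 2 * B) ^ k / t ^ (2 * k)"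
    and prob_centered_ge_le_exp:
      "\<forall>j\<in>{1..d}. (2 * real k - 1) ^ j * weight n f j \<le> (t / (real d * exp 1))\<^sup>2 \<Longrightarrow>
       measure_pmf.prob (rad n) {x. t \<le> \<bar>f x - measure_pmf.expectation (rad n) f\<bar>}
         \<le> exp (- (2 * real k))"
proof -
  let ?prob = "measure_pmf.prob (rad n) {x. t \<le> \<bar>f x - measure_pmf.expectation (rad n) f\<bar>}"
  show moment: "?prob \<le> (real d ^ 2 * B) ^ k / t ^ (2 * k)"
    if "\<forall>j\<in>{1..d}. (2 * real k - 1) ^ j * weight n f j \<le> B" for B
  proof -
    have "?prob \<le> cube_mean n (\<lambda>x. (f x - measure_pmf.expectation (rad n) f) ^ (2 * k)) / t ^ (2 * k)"
      by (rule prob_rad_abs_ge_le[OF assms(2)])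
    also have "\<dots> \<le> (real d ^ 2 * B) ^ k / t ^ (2 * k)"
      using centered_moment_le[OF f assms(3) that] assms(2) by (intro divide_right_mono) simp_all
    finally show ?thesis .
  qed
  assume "\<forall>j\<in>{1..d}. (2 * real k - 1) ^ j * weight n f j \<le> (t / (real d * exp 1))\<^sup>2"
  then have "?prob \<le> (real d ^ 2 * (t / (real d * exp 1))\<^sup>2) ^ k / t ^ (2 * k)"
    by (rule moment)
  also have "\<dots> \<le> (t / exp 1) ^ (2 * k) / t ^ (2 * k)"
    using assms(2,3) by (cases "d = 0") (simp_all add: power_divide power_mult_distrib power_mult power_0_left)
  also have "\<dots> = exp (- (2 * real k))"
    using assms(2) by (simp add: power_divide exp_minus inverse_eq_divide exp_of_nat_mult[symmetric])
  finally show "?prob \<le> exp (- (2 * real k))" .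
qed

theorem proposition2p3:
  fixes n d :: nat and f :: "(nat \<Rightarrow> real) \<Rightarrow> real" and c :: "nat set \<Rightarrow> real" and t :: real
  assumes "d \<le> n"
    and "\<forall>x\<in>cube n. f x = (\<Sum>S\<in>{S. S \<subseteq> {..<n} \<and> card S \<le> d}. c S * chi S x)"
    and "t > 0"
  shows "measure_pmf.prob (rad n)
           {x. \<bar>f x - measure_pmf.expectation (rad n) f\<bar> \<ge> t}
         \<le> (let J = {j\<in>{1..d}. weight n f j \<noteq> 0} in
            if J = {} then 0
            else exp (1 - Min ((\<lambda>j. (t / (real d * exp 1 * sqrt (weight n f j))) powr (2 / real j)) ` J)))"
proof -
  define J where "J = {j\<in>{1..d}. weight n f j \<noteq> 0}"
  define P where "P = Min ((\<lambda>j. (t / (real d * exp 1 * sqrt (weight n f j))) powr (2 / real j)) ` J)"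
  define prob where "prob = measure_pmf.prob (rad n) {x. t \<le> \<bar>f x - measure_pmf.expectation (rad n) f\<bar>}"
  have "prob \<le> (if J = {} then 0 else exp (1 - P))"
  proof (cases "J = {}")
    case True
    txt \<open>All weights vanish, so the second moment of f - E f is zero.\<close>
    then have "prob \<le> (real d ^ 2 * 0) ^ 1 / t ^ (2 * 1)"
      unfolding prob_def J_def using assms(2,3) by (intro prob_centered_ge_le_moment) auto
    then show ?thesis using True by simp
  next
    case False
    show ?thesis
    proof (cases "P < 1")
      case True
      have "prob \<le> 1" unfolding prob_def by (rule measure_pmf.prob_le_1)
      also have "1 < exp (1 - P)" using True by simp
      finally show ?thesis using False by simp
    next
      case P: False
      then obtain k where k: "1 \<le> k" "2 * real k - 1 \<le> P" "P < 2 * real k + 1"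
        using obtain_odd_bracket[of P] by force
      have "prob \<le> exp (- (2 * real k))"
        using k assms(2,3) unfolding prob_def P_def J_def
        by (intro prob_centered_ge_le_exp weights_le_of_le_Min) (auto simp: weight_def sum_nonneg)
      also have "\<dots> \<le> exp (1 - P)" using k(3) by simp
      finally show ?thesis using False by simp
    qed
  qed
  then show ?thesis unfolding prob_def P_def J_def Let_def by simp
qed

end
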